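(* For all $L>0$, $\delta t>0$ and $J\ge2$ with $\delta t/\delta x^2\le1/2$, and all $\ell\in\{0,\dots,J-1\}$, $$|1+\delta t\,\lambda_\ell|\le \exp\Big(-\frac{\delta t}{\delta x^2}\sin^2\Big(\frac{\ell\pi}{J}\Big)\Big).$$
   Context: $\delta x=L/(J-1)$ and $\lambda_\ell=-\frac{4}{\delta x^2}\sin^2\big(\frac{\ell\pi}{2J}\big)$, $0\le\ell\le J-1$ (these are the eigenvalues of the Neumann finite-difference matrix $\mathsf P_\delta=\frac1{\delta x^2}\,\mathrm{tridiag}$ with diagonal $(-1,-2,\dots,-2,-1)$ and off-diagonals $1$). *)

theory Defs
  imports Complex_Main
begin

definition grid_dx :: "real \<Rightarrow> nat \<Rightarrow> real" where
  "grid_dx L J = L / (real J - 1)"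

definition neumann_eig :: "real \<Rightarrow> nat \<Rightarrow> nat \<Rightarrow> real" where
  "neumann_eig L J l = - (4 / (grid_dx L J)^2) * (sin (real l * pi / (2 * real J)))^2"

end

theory Submission
  imports Defs
begin

text \<open>With \<open>r = \<delta>t/\<delta>x\<^sup>2\<close> and \<open>s = sin\<^sup>2(\<ell>\<pi>/2J)\<close> the amplification factor is \<open>1 - 4rs\<close>,
  and \<open>sin\<^sup>2(\<ell>\<pi>/J) = 4s(1 - s)\<close>. For \<open>r \<le> 1/2\<close> one has
  \<open>|1 - 4rs| \<le> 1 - 4rs(1 - s)\<close>, and \<open>1 - x \<le> exp (-x)\<close> finishes the proof.\<close>

lemma abs_one_minus_4rs_le:
  fixes r s :: real
  assumes "0 \<le> r" "r \<le> 1/2" "0 \<le> s" "s \<le> 1"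
  shows "\<bar>1 - 4*r*s\<bar> \<le> 1 - 4*r*s*(1 - s)"
proof -
  have upper: "1 - 4*r*s \<le> 1 - 4*r*s*(1 - s)"
    using assms by (simp add: algebra_simps)
  have "4*r*s*(2 - s) \<le> 2*s*(2 - s)"
    using assms by (intro mult_right_mono) auto
  also have "\<dots> = 2 - 2*(1 - s)^2"
    by (simp add: power2_eq_square algebra_simps)
  also have "\<dots> \<le> 2" by simp
  finally have lower: "-(1 - 4*r*s) \<le> 1 - 4*r*s*(1 - s)"
    by (simp add: algebra_simps)
  show ?thesis using upper lower by linarith
qed

lemma sin_double_squared: "(sin (2*t))^2 = (4::real) * (sin t)^2 * (1 - (sin t)^2)"
  by (simp add: sin_double power_mult_distrib cos_squared_eq)

theorem proposition3p2:
  fixes L dt :: real and J l :: nat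
  assumes "L > 0" and "dt > 0" and "J \<ge> 2"
    and "dt / (grid_dx L J)^2 \<le> 1/2"
    and "l \<le> J - 1"
  shows "\<bar>1 + dt * neumann_eig L J l\<bar>
           \<le> exp (- (dt / (grid_dx L J)^2) * (sin (real l * pi / real J))^2)"
proof -
  define r where "r = dt / (grid_dx L J)^2"
  define t where "t = real l * pi / (2 * real J)"
  define s where "s = (sin t)^2"
  have amplification: "1 + dt * neumann_eig L J l = 1 - 4*r*s"
    by (simp add: neumann_eig_def r_def s_def t_def)
  have "0 \<le> r" using assms(2) by (simp add: r_def)
  moreover have "0 \<le> s" "s \<le> 1" by (simp_all add: s_def abs_square_le_1)
  ultimately have "\<bar>1 - 4*r*s\<bar> \<le> 1 - 4*r*s*(1 - s)"
    using assms(4) by (intro abs_one_minus_4rs_le) (simp_all add: r_def)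
  also have "\<dots> \<le> exp (- (4*r*s*(1 - s)))"
    using exp_ge_add_one_self[of "- (4*r*s*(1 - s))"] by simp
  also have "4*r*s*(1 - s) = r * (sin (2*t))^2"
    by (simp add: sin_double_squared s_def)
  also have "2*t = real l * pi / real J" by (simp add: t_def)
  finally show ?thesis
    by (simp add: amplification r_def)
qed

end
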